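(* Let $\mathcal{H}$ and $\mathcal{G}$ be Sperner hypergraphs on the same vertex set $V$ with $\mathcal{G}\subseteq Tr(\mathcal{H})$ and $\mathcal{H}\subseteq Tr(\mathcal{G})$, and let $k\in\mathbb{N}$. Consider the following procedure. (1) For each $k$-trace $(T,S)$ on $V$ with $(T,S)\notin\mathrm{traces}_k(\mathcal{H})$: if there exists $E\in Tr(\mathcal{G})$ realizing $(T,S)$, return such an $E$. (2) For each $E\in\mathrm{ext}_k(\mathcal{H})$ that is not contained in any hyperedge of $\mathcal{H}$: if $E\in Tr(\mathcal{G})$, return $E$. (3) Return "Yes". Then this procedure returns "Yes" if $Tr(\mathcal{G})=\mathcal{H}$, and otherwise returns a set $E\in Tr(\mathcal{G})\setminus\mathcal{H}$.
   Context: A hypergraph on $V$ is a family of subsets (hyperedges) of $V$; it is Sperner if no hyperedge contains another. A transversal meets every hyperedge; $Tr(\cdot)$ denotes the hypergraph of inclusion-minimal transversals. A $k$-trace on $V$ is a pair $(T,S)$ with $S\subseteq V$, $|S|=k$, $T\subseteq S$; a set $F$ realizes it if $F\cap S=T$. $\mathrm{traces}_k(F)$ is the set of $k$-traces realized by $F$, and $\mathrm{traces}_k(\mathcal{H})=\bigcup_{F\in\mathcal{H}}\mathrm{traces}_k(F)$. $\mathrm{ext}_k(\mathcal{H})$ is the hypergraph on $V$ consisting of all $E\subseteq V$ with $\mathrm{traces}_k(E)\subseteq\mathrm{traces}_k(\mathcal{H})$. *)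

theory Defs
  imports Main
begin

definition hypergraph_on :: "'a set \<Rightarrow> 'a set set \<Rightarrow> bool" where
  "hypergraph_on V H \<longleftrightarrow> (\<forall>E\<in>H. E \<subseteq> V)"

definition sperner :: "'a set set \<Rightarrow> bool" where
  "sperner H \<longleftrightarrow> (\<forall>A\<in>H. \<forall>B\<in>H. A \<subseteq> B \<longrightarrow> A = B)"

definition is_transversal :: "'a set \<Rightarrow> 'a set set \<Rightarrow> 'a set \<Rightarrow> bool" where
  "is_transversal V H T \<longleftrightarrow> T \<subseteq> V \<and> (\<forall>E\<in>H. T \<inter> E \<noteq> {})"

definition Tr :: "'a set \<Rightarrow> 'a set set \<Rightarrow> 'a set set" where
  "Tr V H = {T. is_transversal V H T \<and> (\<forall>T'. T' \<subset> T \<longrightarrow> \<not> is_transversal V H T')}"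

definition is_ktrace :: "'a set \<Rightarrow> nat \<Rightarrow> 'a set \<times> 'a set \<Rightarrow> bool" where
  "is_ktrace V k TS \<longleftrightarrow> (case TS of (T, S) \<Rightarrow> S \<subseteq> V \<and> finite S \<and> card S = k \<and> T \<subseteq> S)"

definition traces_set :: "'a set \<Rightarrow> nat \<Rightarrow> 'a set \<Rightarrow> ('a set \<times> 'a set) set" where
  "traces_set V k F = {(T, S). is_ktrace V k (T, S) \<and> F \<inter> S = T}"

definition traces :: "'a set \<Rightarrow> nat \<Rightarrow> 'a set set \<Rightarrow> ('a set \<times> 'a set) set" where
  "traces V k H = (\<Union>F\<in>H. traces_set V k F)"

definition ext :: "'a set \<Rightarrow> nat \<Rightarrow> 'a set set \<Rightarrow> 'a set set" where
  "ext V k H = {E. E \<subseteq> V \<and> traces_set V k E \<subseteq> traces V k H}"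

definition step1_cands :: "'a set \<Rightarrow> nat \<Rightarrow> 'a set set \<Rightarrow> 'a set set \<Rightarrow> 'a set set" where
  "step1_cands V k H G = {E \<in> Tr V G. \<exists>T S. is_ktrace V k (T, S) \<and> (T, S) \<notin> traces V k H \<and> E \<inter> S = T}"

definition step2_cands :: "'a set \<Rightarrow> nat \<Rightarrow> 'a set set \<Rightarrow> 'a set set \<Rightarrow> 'a set set" where
  "step2_cands V k H G = {E \<in> ext V k H. (\<forall>F\<in>H. \<not> E \<subseteq> F) \<and> E \<in> Tr V G}"

text \<open>All possible results of the (nondeterministic, order-dependent) procedure:
  None encodes "Yes", Some E encodes returning E.\<close>
definition procedure_outputs :: "'a set \<Rightarrow> nat \<Rightarrow> 'a set set \<Rightarrow> 'a set set \<Rightarrow> 'a set option set" where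
  "procedure_outputs V k H G =
     (if step1_cands V k H G \<noteq> {} then Some ` step1_cands V k H G
      else if step2_cands V k H G \<noteq> {} then Some ` step2_cands V k H G
      else {None})"

end

theory Submission
  imports Defs
begin

text \<open>Step (1) only returns sets with a k-trace that no hyperedge of H has, and step (2) only sets
  contained in no hyperedge of H, so every returned set lies in Tr(G) - H. Conversely, a set
  E \<in> Tr(G) - H either has a k-trace outside traces_k(H), and is found in step (1), or lies in
  ext_k(H); in the latter case E is contained in no F \<in> H, because H \<subseteq> Tr(G) and Tr(G) is
  Sperner, so it is found in step (2). Hence "Yes" is returned exactly when Tr(G) - H is empty.\<close>

lemma sperner_Tr: "sperner (Tr V H)"
  unfolding sperner_def Tr_def by blast

lemma traces_set_subset_traces: "F \<in> H \<Longrightarrow> traces_set V k F \<subseteq> traces V k H"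
  unfolding traces_def by blast

lemma step1_cands_subset: "step1_cands V k H G \<subseteq> Tr V G - H"
proof
  fix E assume "E \<in> step1_cands V k H G"
  then obtain T S where "E \<in> Tr V G" and "(T, S) \<in> traces_set V k E" and "(T, S) \<notin> traces V k H"
    unfolding step1_cands_def traces_set_def by blast
  then show "E \<in> Tr V G - H"
    using traces_set_subset_traces by blast
qed

lemma step2_cands_subset: "step2_cands V k H G \<subseteq> Tr V G - H"
  unfolding step2_cands_def by blast

lemma step_cands_eq:
  assumes "H \<subseteq> Tr V G"
  shows "step1_cands V k H G \<union> step2_cands V k H G = Tr V G - H"
proof
  show "step1_cands V k H G \<union> step2_cands V k H G \<subseteq> Tr V G - H"
    using step1_cands_subset step2_cands_subset by blast
next
  show "Tr V G - H \<subseteq> step1_cands V k H G \<union> step2_cands V k H G"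
  proof
    fix E assume E: "E \<in> Tr V G - H"
    show "E \<in> step1_cands V k H G \<union> step2_cands V k H G"
    proof (cases "traces_set V k E \<subseteq> traces V k H")
      case True
      have "E \<subseteq> V"
        using E unfolding Tr_def is_transversal_def by blast
      with True have "E \<in> ext V k H"
        unfolding ext_def by blast
      moreover have "\<not> E \<subseteq> F" if "F \<in> H" for F
        using sperner_Tr[of V G] assms E that unfolding sperner_def by blast
      ultimately show ?thesis
        using E unfolding step2_cands_def by blast
    next
      case False
      then show ?thesis
        using E unfolding step1_cands_def traces_set_def by blast
    qed
  qed
qed

lemma procedure_outputs_Some:
  assumes "Some E \<in> procedure_outputs V k H G"
  shows "E \<in> Tr V G - H"
proof -
  have "E \<in> step1_cands V k H G \<union> step2_cands V k H G"
    using assms unfolding procedure_outputs_def by (auto split: if_splits)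
  then show ?thesis
    using step1_cands_subset step2_cands_subset by blast
qed

lemma procedure_outputs_None_iff:
  "None \<in> procedure_outputs V k H G \<longleftrightarrow> step1_cands V k H G \<union> step2_cands V k H G = {}"
  unfolding procedure_outputs_def by auto

theorem theorem2:
  fixes V :: "'a set" and H G :: "'a set set" and k :: nat
  assumes "finite V"
    and "hypergraph_on V H" and "hypergraph_on V G"
    and "sperner H" and "sperner G"
    and "G \<subseteq> Tr V H" and "H \<subseteq> Tr V G"
    and "r \<in> procedure_outputs V k H G"
  shows "(r = None \<longleftrightarrow> Tr V G = H) \<and> (\<forall>E. r = Some E \<longrightarrow> E \<in> Tr V G - H)"
proof (cases r)
  case None
  have "None \<in> procedure_outputs V k H G \<longleftrightarrow> Tr V G = H"
    unfolding procedure_outputs_None_iff step_cands_eq[OF \<open>H \<subseteq> Tr V G\<close>]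
    using \<open>H \<subseteq> Tr V G\<close> by blast
  with None show ?thesis
    using \<open>r \<in> procedure_outputs V k H G\<close> by simp
next
  case (Some E)
  then have "E \<in> Tr V G - H"
    using \<open>r \<in> procedure_outputs V k H G\<close> procedure_outputs_Some by blast
  with Some show ?thesis
    by blast
qed

end
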